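(* A graph $G=(V,E)$ is $(1,1)$-well-covered if and only if it admits a partition $V=(S,K)$, with $S$ an independent set and $K$ a clique, such that either $|N(x)\cap S|=0$ for every $x\in K$, or $|N(x)\cap S|=1$ for every $x \in K$.
   Context: A $(1,1)$-partition of $G$ is a partition of $V(G)$ into an independent set and a clique (possibly empty). A graph is well-covered if all its maximal independent sets have the same cardinality; it is $(1,1)$-well-covered if it admits a $(1,1)$-partition and is well-covered. $N(x)$ denotes the set of neighbors of $x$. *)

theory Defs
  imports Main
begin

definition simple_graph :: "'a set \<Rightarrow> ('a \<Rightarrow> 'a \<Rightarrow> bool) \<Rightarrow> bool" where
  "simple_graph V E \<longleftrightarrow> finite V \<and> (\<forall>x y. E x y \<longrightarrow> x \<in> V \<and> y \<in> V)
     \<and> (\<forall>x y. E x y \<longrightarrow> E y x) \<and> (\<forall>x. \<not> E x x)"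

definition nbrs :: "('a \<Rightarrow> 'a \<Rightarrow> bool) \<Rightarrow> 'a \<Rightarrow> 'a set" where
  "nbrs E x = {y. E x y}"

definition independent_set :: "'a set \<Rightarrow> ('a \<Rightarrow> 'a \<Rightarrow> bool) \<Rightarrow> 'a set \<Rightarrow> bool" where
  "independent_set V E S \<longleftrightarrow> S \<subseteq> V \<and> (\<forall>x\<in>S. \<forall>y\<in>S. \<not> E x y)"

definition clique :: "'a set \<Rightarrow> ('a \<Rightarrow> 'a \<Rightarrow> bool) \<Rightarrow> 'a set \<Rightarrow> bool" where
  "clique V E K \<longleftrightarrow> K \<subseteq> V \<and> (\<forall>x\<in>K. \<forall>y\<in>K. x \<noteq> y \<longrightarrow> E x y)"

definition maximal_independent_set :: "'a set \<Rightarrow> ('a \<Rightarrow> 'a \<Rightarrow> bool) \<Rightarrow> 'a set \<Rightarrow> bool" where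
  "maximal_independent_set V E S \<longleftrightarrow> independent_set V E S
     \<and> (\<forall>T. independent_set V E T \<and> S \<subseteq> T \<longrightarrow> T = S)"

definition well_covered :: "'a set \<Rightarrow> ('a \<Rightarrow> 'a \<Rightarrow> bool) \<Rightarrow> bool" where
  "well_covered V E \<longleftrightarrow> (\<forall>S T. maximal_independent_set V E S \<and> maximal_independent_set V E T
     \<longrightarrow> card S = card T)"

definition partition_11 :: "'a set \<Rightarrow> ('a \<Rightarrow> 'a \<Rightarrow> bool) \<Rightarrow> 'a set \<Rightarrow> 'a set \<Rightarrow> bool" where
  "partition_11 V E S K \<longleftrightarrow> S \<inter> K = {} \<and> S \<union> K = V \<and> independent_set V E S \<and> clique V E K"

definition well_covered_11 :: "'a set \<Rightarrow> ('a \<Rightarrow> 'a \<Rightarrow> bool) \<Rightarrow> bool" where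
  "well_covered_11 V E \<longleftrightarrow> (\<exists>S K. partition_11 V E S K) \<and> well_covered V E"

end

theory Submission
  imports Defs
begin

text \<open>Relative to a (1,1)-partition (S,K), the maximal independent sets are S itself (when every
  vertex of K has a neighbour in S) and the sets (S - N(x)) \<union> {x} for x \<in> K,
  of size |S| + 1 - |N(x) \<inter> S|. So the graph is well-covered iff |N(x) \<inter> S| is the same
  for all x \<in> K, and equal to 1 if S is maximal; that is, iff it is constantly 0 or constantly 1.\<close>

definition exchange :: "('a \<Rightarrow> 'a \<Rightarrow> bool) \<Rightarrow> 'a set \<Rightarrow> 'a \<Rightarrow> 'a set" where
  "exchange E S x = insert x (S - nbrs E x)"

locale graph_partition_11 =
  fixes V :: "'a set" and E :: "'a \<Rightarrow> 'a \<Rightarrow> bool" and S K :: "'a set"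
  assumes graph: "simple_graph V E"
    and partition: "partition_11 V E S K"
begin

lemma edge_sym: "E a b \<Longrightarrow> E b a"
  and edge_irrefl: "\<not> E a a"
  using graph unfolding simple_graph_def by auto

lemma S_independent: "\<lbrakk>a \<in> S; b \<in> S\<rbrakk> \<Longrightarrow> \<not> E a b"
  and K_clique: "\<lbrakk>a \<in> K; b \<in> K; a \<noteq> b\<rbrakk> \<Longrightarrow> E a b"
  and S_K_disjoint: "S \<inter> K = {}"
  and S_Un_K: "S \<union> K = V"
  using partition unfolding partition_11_def independent_set_def clique_def by auto

lemma finite_S: "finite S"
  using graph S_Un_K unfolding simple_graph_def by (metis finite_Un)

lemma independent_set_subset_exchange:
  assumes "independent_set V E I" "x \<in> I" "x \<in> K"
  shows "I \<subseteq> exchange E S x"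
proof
  fix y assume "y \<in> I"
  with assms(1,2) have "y \<in> V" "\<not> E x y"
    unfolding independent_set_def by auto
  with assms(3) S_Un_K K_clique show "y \<in> exchange E S x"
    unfolding exchange_def nbrs_def by auto
qed

lemma maximal_independent_exchange:
  assumes "x \<in> K"
  shows "maximal_independent_set V E (exchange E S x)"
proof -
  have "independent_set V E (exchange E S x)"
    using assms S_Un_K S_independent edge_sym edge_irrefl
    unfolding independent_set_def exchange_def nbrs_def by blast
  moreover have "T = exchange E S x"
    if "independent_set V E T" "exchange E S x \<subseteq> T" for T
    using that independent_set_subset_exchange[OF that(1) _ assms]
    unfolding exchange_def by blast
  ultimately show ?thesis
    unfolding maximal_independent_set_def by blast
qed

lemma maximal_independent_cases:
  assumes "maximal_independent_set V E I"
  obtains "I = S" | x where "x \<in> K" "I = exchange E S x"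
proof (cases "I \<inter> K = {}")
  case True
  with assms S_Un_K have "I \<subseteq> S"
    unfolding maximal_independent_set_def independent_set_def by auto
  with assms partition have "I = S"
    unfolding maximal_independent_set_def partition_11_def by auto
  then show ?thesis by (rule that(1))
next
  case False
  then obtain x where x: "x \<in> I" "x \<in> K" by auto
  with assms have "I \<subseteq> exchange E S x"
    by (intro independent_set_subset_exchange) (auto simp: maximal_independent_set_def)
  with assms maximal_independent_exchange[OF x(2)] have "I = exchange E S x"
    unfolding maximal_independent_set_def by auto
  with x(2) show ?thesis by (rule that(2))
qed

lemma maximal_independent_S_iff:
  "maximal_independent_set V E S \<longleftrightarrow> (\<forall>x\<in>K. nbrs E x \<inter> S \<noteq> {})"
proof
  assume max: "maximal_independent_set V E S"
  show "\<forall>x\<in>K. nbrs E x \<inter> S \<noteq> {}"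
  proof (intro ballI notI)
    fix x assume x: "x \<in> K" "nbrs E x \<inter> S = {}"
    then have "S \<subseteq> exchange E S x" "x \<notin> S"
      using S_K_disjoint unfolding exchange_def by auto
    with max maximal_independent_exchange[OF x(1)] show False
      unfolding maximal_independent_set_def exchange_def by blast
  qed
next
  assume nbr: "\<forall>x\<in>K. nbrs E x \<inter> S \<noteq> {}"
  have "T = S" if T: "independent_set V E T" "S \<subseteq> T" for T
  proof -
    have "y \<notin> K" if "y \<in> T" for y
      using that T nbr unfolding independent_set_def nbrs_def by blast
    with T S_Un_K show ?thesis
      unfolding independent_set_def by blast
  qed
  with partition show "maximal_independent_set V E S"
    unfolding maximal_independent_set_def partition_11_def by blast
qed

lemma card_exchange:
  assumes "x \<in> K"
  shows "card (exchange E S x) + card (nbrs E x \<inter> S) = Suc (card S)"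
proof -
  have "x \<notin> S - nbrs E x"
    using assms S_K_disjoint by auto
  then have "card (exchange E S x) = Suc (card (S - nbrs E x))"
    using finite_S unfolding exchange_def by simp
  moreover have "card (S - nbrs E x) + card (nbrs E x \<inter> S) = card S"
    using finite_S card_Diff_subset_Int[of S "nbrs E x"] card_mono[of S "S \<inter> nbrs E x"]
    by (simp add: Int_commute)
  ultimately show ?thesis by simp
qed

lemma well_covered_iff_exchange_cards:
  "well_covered V E \<longleftrightarrow>
     (\<forall>x\<in>K. \<forall>y\<in>K. card (exchange E S x) = card (exchange E S y)) \<and>
     (maximal_independent_set V E S \<longrightarrow> (\<forall>x\<in>K. card (exchange E S x) = card S))"
proof
  assume "well_covered V E"
  then show "(\<forall>x\<in>K. \<forall>y\<in>K. card (exchange E S x) = card (exchange E S y)) \<and>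
     (maximal_independent_set V E S \<longrightarrow> (\<forall>x\<in>K. card (exchange E S x) = card S))"
    using maximal_independent_exchange unfolding well_covered_def by blast
next
  assume "(\<forall>x\<in>K. \<forall>y\<in>K. card (exchange E S x) = card (exchange E S y)) \<and>
     (maximal_independent_set V E S \<longrightarrow> (\<forall>x\<in>K. card (exchange E S x) = card S))"
  then have exchanges: "\<And>x y. \<lbrakk>x \<in> K; y \<in> K\<rbrakk> \<Longrightarrow> card (exchange E S x) = card (exchange E S y)"
    and S_max: "\<And>x. \<lbrakk>maximal_independent_set V E S; x \<in> K\<rbrakk> \<Longrightarrow> card (exchange E S x) = card S"
    by blast+
  show "well_covered V E"
    unfolding well_covered_def
  proof (intro allI impI, elim conjE)
    fix I J assume I: "maximal_independent_set V E I" and J: "maximal_independent_set V E J"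
    show "card I = card J"
    proof (cases rule: maximal_independent_cases[OF I])
      case 1
      then show ?thesis
        by (cases rule: maximal_independent_cases[OF J]) (use I S_max in metis)+
    next
      case (2 x)
      then show ?thesis
        by (cases rule: maximal_independent_cases[OF J]) (use J S_max exchanges in metis)+
    qed
  qed
qed

lemma well_covered_iff_nbr_counts:
  "well_covered V E \<longleftrightarrow>
     (\<forall>x\<in>K. card (nbrs E x \<inter> S) = 0) \<or> (\<forall>x\<in>K. card (nbrs E x \<inter> S) = 1)"
    (is "_ \<longleftrightarrow> (\<forall>x\<in>K. ?d x = 0) \<or> (\<forall>x\<in>K. ?d x = 1)")
proof -
  have "card (exchange E S x) = card (exchange E S y) \<longleftrightarrow> ?d x = ?d y"
    if "x \<in> K" "y \<in> K" for x y
    using card_exchange[OF that(1)] card_exchange[OF that(2)] by linarith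
  moreover have "card (exchange E S x) = card S \<longleftrightarrow> ?d x = 1" if "x \<in> K" for x
    using card_exchange[OF that] by linarith
  moreover have "nbrs E x \<inter> S \<noteq> {} \<longleftrightarrow> ?d x \<noteq> 0" for x
    using finite_S by simp
  ultimately have "well_covered V E \<longleftrightarrow>
      (\<forall>x\<in>K. \<forall>y\<in>K. ?d x = ?d y) \<and> ((\<forall>x\<in>K. ?d x \<noteq> 0) \<longrightarrow> (\<forall>x\<in>K. ?d x = 1))"
    unfolding well_covered_iff_exchange_cards maximal_independent_S_iff by (simp cong: ball_cong)
  then show ?thesis by metis
qed

end

theorem lemma3:
  assumes "simple_graph V E"
  shows "well_covered_11 V E \<longleftrightarrow>
    (\<exists>S K. partition_11 V E S K \<and>
       ((\<forall>x\<in>K. card (nbrs E x \<inter> S) = 0) \<or> (\<forall>x\<in>K. card (nbrs E x \<inter> S) = 1)))"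
proof -
  have "well_covered_11 V E \<longleftrightarrow> (\<exists>S K. partition_11 V E S K \<and> well_covered V E)"
    unfolding well_covered_11_def by blast
  also have "\<dots> \<longleftrightarrow> (\<exists>S K. partition_11 V E S K \<and>
       ((\<forall>x\<in>K. card (nbrs E x \<inter> S) = 0) \<or> (\<forall>x\<in>K. card (nbrs E x \<inter> S) = 1)))"
    using assms graph_partition_11.well_covered_iff_nbr_counts
    unfolding graph_partition_11_def by blast
  finally show ?thesis .
qed

end
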